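(* Let $k,n$ be positive integers with $k\leqslant n$ and let $C\in\mathrm{Conf}([n]^k_<)$ be a shelling order. Then its evacuation $\epsilon_D C$ is a shelling order.
   Context: $[n]:=\{1,\ldots,n\}$; $[n]^k_<$ denotes the set of $k$-element subsets of $[n]$. $\mathrm{Conf}([n]^k_<)$ is the set of tuples $C=(C_1,\ldots,C_h)$, $h\geqslant1$, of pairwise distinct elements of $[n]^k_<$. $C$ is a shelling order if for all $i<j$ in $[h]$ there exists $z<j$ with $|C_z\cap C_j|=k-1$ and $C_i\cap C_j\subseteq C_z\cap C_j$. The dual graph $D(C)$ is the graph on $[h]$ with $\{i,j\}$ an edge iff $|C_i\cap C_j|=k-1$. For a graph $G$ on $[h]$, its track $T_G=\{v_1,\ldots,v_r\}$ is defined by $v_1=1$ and, for $i\geqslant2$, $v_i=\min\{j\in[h]: j>v_{i-1},\ \{v_{i-1},j\}\text{ an edge}\}$ if this exists, otherwise $r=i-1$. The promotion $\partial_G\in S_h$ is given by $\partial_G(i)=i-1$ for $i\notin T_G$, $\partial_G(v_j)=v_{j+1}-1$ for $j\in[r-1]$, $\partial_G(v_r)=h$. For $\sigma\in S_h$, $\sigma C:=(C_{\sigma^{-1}(1)},\ldots,C_{\sigma^{-1}(h)})$, and $\partial_D C:=\partial_{D(C)}C$. For $r\in[h]$, the $r$-promotion is $\partial_{r,D}C:=(\partial_D(C_1,\ldots,C_r),C_{r+1},\ldots,C_h)$, i.e. promotion applied to the prefix of length $r$ followed by the unchanged remaining entries. The evacuation is $\epsilon_D C:=(\partial_{2,D}\circ\cdots\circ\partial_{h-1,D}\circ\partial_{h,D})(C)$.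 *)

theory Defs
  imports Main
begin

(* Configurations are lists of k-subsets of [n]; the paper's C_i (1-based) is C ! (i - 1). *)

definition kset :: "nat \<Rightarrow> nat \<Rightarrow> nat set set" where
  "kset n k = {A. A \<subseteq> {1..n} \<and> card A = k}"

definition Conf :: "nat \<Rightarrow> nat \<Rightarrow> nat set list set" where
  "Conf n k = {C. length C \<ge> 1 \<and> distinct C \<and> set C \<subseteq> kset n k}"

definition ent :: "'a list \<Rightarrow> nat \<Rightarrow> 'a" where
  "ent C i = C ! (i - 1)"

definition shelling :: "nat \<Rightarrow> nat set list \<Rightarrow> bool" where
  "shelling k C \<longleftrightarrow>
     (\<forall>i j. 1 \<le> i \<and> i < j \<and> j \<le> length C \<longrightarrow>
        (\<exists>z. 1 \<le> z \<and> z < j \<and> card (ent C z \<inter> ent C j) = k - 1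
              \<and> ent C i \<inter> ent C j \<subseteq> ent C z \<inter> ent C j))"

definition dual :: "nat \<Rightarrow> nat set list \<Rightarrow> nat \<Rightarrow> nat \<Rightarrow> bool" where
  "dual k C i j \<longleftrightarrow> 1 \<le> i \<and> i \<le> length C \<and> 1 \<le> j \<and> j \<le> length C \<and> i \<noteq> j
      \<and> card (ent C i \<inter> ent C j) = k - 1"

function trk :: "(nat \<Rightarrow> nat \<Rightarrow> bool) \<Rightarrow> nat \<Rightarrow> nat \<Rightarrow> nat list" where
  "trk G h v = (let S = {j. v < j \<and> j \<le> h \<and> G v j} in
                 if S = {} then [v] else v # trk G h (Min S))"
  by pat_completeness auto
termination
proof (relation "measure (\<lambda>(G, h, v). h - v)")
  fix G :: "nat \<Rightarrow> nat \<Rightarrow> bool" and h v :: nat and S :: "nat set"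
  assume S: "S = {j. v < j \<and> j \<le> h \<and> G v j}" "S \<noteq> {}"
  have fin: "finite S" unfolding S(1) by (rule finite_subset[of _ "{..h}"]) (auto simp: finite_atMost)
  have "Min S \<in> S" using fin S(2) by (rule Min_in)
  then show "((G, h, Min S), G, h, v) \<in> measure (\<lambda>(G, h, v). h - v)"
    using S(1) by auto
qed auto

definition track :: "(nat \<Rightarrow> nat \<Rightarrow> bool) \<Rightarrow> nat \<Rightarrow> nat list" where
  "track G h = trk G h 1"

(* promotion permutation \<partial>_G in S_h (track is strictly increasing, so indices are unique) *)
definition promperm :: "(nat \<Rightarrow> nat \<Rightarrow> bool) \<Rightarrow> nat \<Rightarrow> nat \<Rightarrow> nat" where
  "promperm G h i =
     (let T = track G h in
      if i \<notin> set T then i - 1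
      else if i = last T then h
      else T ! (Suc (LEAST j. T ! j = i)) - 1)"

(* \<sigma>C = (C_{\<sigma>^{-1}(1)}, ..., C_{\<sigma>^{-1}(h)}) *)
definition permute :: "(nat \<Rightarrow> nat) \<Rightarrow> 'a list \<Rightarrow> 'a list" where
  "permute \<sigma> C = map (\<lambda>m. ent C (THE i. 1 \<le> i \<and> i \<le> length C \<and> \<sigma> i = m)) [1..<length C + 1]"

definition promD :: "nat \<Rightarrow> nat set list \<Rightarrow> nat set list" where
  "promD k C = permute (promperm (dual k C) (length C)) C"

definition rpromD :: "nat \<Rightarrow> nat \<Rightarrow> nat set list \<Rightarrow> nat set list" where
  "rpromD k r C = promD k (take r C) @ drop r C"

(* evacuation: \<partial>_{2} \<circ> ... \<circ> \<partial>_{h-1} \<circ> \<partial>_{h}, applying \<partial>_h first *)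
definition evacD :: "nat \<Rightarrow> nat set list \<Rightarrow> nat set list" where
  "evacD k C = foldl (\<lambda>D r. rpromD k r D) C (rev [2..<length C + 1])"

end

theory Submission
  imports Defs
begin

(* Evacuation is a composition of r-promotions, each of which promotes a prefix and fixes the
   rest, so it suffices that promoting a prefix of a shelling order yields a shelling order.
   Promotion moves every vertex off the track one step down and every track vertex to just
   before the next track vertex (the last one to the end).  Two properties of this permutation
   do the work: it keeps the relative order of the endpoints z < m of every edge of the dual
   graph, and if it inverts a pair m < i then m has no neighbour in (m, i].  For a pair that
   keeps its order the old shelling witness still works; for an inverted pair the shelling
   property supplies an earlier neighbour z of m with C_i \<inter> C_m \<subseteq> C_z, which stays
   before m after promotion. *)

section \<open>The track of a graph and its promotion permutation\<close>

definition upper_nbrs :: "(nat \<Rightarrow> nat \<Rightarrow> bool) \<Rightarrow> nat \<Rightarrow> nat \<Rightarrow> nat set" where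
  "upper_nbrs G h x = {j. x < j \<and> j \<le> h \<and> G x j}"

lemma finite_upper_nbrs: "finite (upper_nbrs G h x)"
  unfolding upper_nbrs_def by (rule finite_subset[of _ "{..h}"]) auto

lemma Min_upper_nbrs:
  assumes "upper_nbrs G h x \<noteq> {}"
  shows "x < Min (upper_nbrs G h x)" "Min (upper_nbrs G h x) \<le> h" "G x (Min (upper_nbrs G h x))"
  using Min_in[OF finite_upper_nbrs assms] unfolding upper_nbrs_def by auto

lemma Min_upper_nbrs_le: "x < a \<Longrightarrow> a \<le> h \<Longrightarrow> G x a \<Longrightarrow> Min (upper_nbrs G h x) \<le> a"
  by (rule Min_le[OF finite_upper_nbrs]) (simp add: upper_nbrs_def)

lemma trk_unfold:
  "trk G h v = v # (if upper_nbrs G h v = {} then [] else trk G h (Min (upper_nbrs G h v)))"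
  by (subst trk.simps) (simp add: upper_nbrs_def Let_def)

declare trk.simps [simp del]

lemma trk_nth_0 [simp]: "trk G h v ! 0 = v"
  by (subst trk_unfold) simp

lemma trk_nth_Suc:
  "Suc i < length (trk G h v) \<Longrightarrow> upper_nbrs G h (trk G h v ! i) \<noteq> {}
     \<and> trk G h v ! Suc i = Min (upper_nbrs G h (trk G h v ! i))"
proof (induction G h v arbitrary: i rule: trk.induct)
  case (1 G h v)
  have "upper_nbrs G h v \<noteq> {}"
    using "1.prems" by (subst (asm) trk_unfold) (auto split: if_splits)
  moreover from this have "trk G h v = v # trk G h (Min (upper_nbrs G h v))"
    by (subst trk_unfold) simp
  ultimately show ?case
    using "1.prems" "1.IH"[OF upper_nbrs_def[of G h v]] by (cases i) auto
qed

lemma upper_nbrs_last_trk: "upper_nbrs G h (last (trk G h v)) = {}"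
proof (induction G h v rule: trk.induct)
  case (1 G h v)
  then show ?case
    by (subst trk_unfold) (auto simp: upper_nbrs_def[symmetric] trk_unfold[of G h "Min _"])
qed

lemma sorted_trk: "sorted_wrt (<) (trk G h v)"
  by (auto simp: sorted_wrt_iff_nth_Suc_transp trk_nth_Suc Min_upper_nbrs)

lemma one_in_track: "1 \<in> set (track G h)"
  unfolding track_def by (subst trk_unfold) simp

lemma track_not_Nil: "track G h \<noteq> []"
  unfolding track_def by (subst trk_unfold) simp

lemma promperm_not_in_track: "x \<notin> set (track G h) \<Longrightarrow> promperm G h x = x - 1"
  by (simp add: promperm_def)

lemma promperm_last_track: "promperm G h (last (track G h)) = h"
  by (simp add: promperm_def track_not_Nil)

lemma promperm_track_nth:
  assumes "Suc i < length (track G h)"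
  shows "promperm G h (track G h ! i) = track G h ! Suc i - 1"
proof -
  let ?T = "track G h"
  have dist: "distinct ?T"
    using sorted_trk strict_sorted_iff by (metis track_def)
  have "?T ! i \<noteq> last ?T"
    using assms nth_eq_iff_index_eq[OF dist, of i "length ?T - 1"]
    by (simp add: last_conv_nth track_not_Nil)
  moreover have "(LEAST j. ?T ! j = ?T ! i) = i"
    using assms dist by (intro Least_equality) (auto simp: nth_eq_iff_index_eq intro: leI)
  ultimately show ?thesis
    using assms by (simp add: promperm_def Let_def)
qed

lemma track_succ_index:
  assumes "x \<in> set (track G h)" "upper_nbrs G h x \<noteq> {}"
  obtains i where "Suc i < length (track G h)" "track G h ! i = x"
proof -
  obtain i where i: "i < length (track G h)" "track G h ! i = x"
    using assms(1) by (auto simp: in_set_conv_nth)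
  have "Suc i < length (track G h)"
  proof (rule ccontr)
    assume "\<not> Suc i < length (track G h)"
    then have "i = length (track G h) - 1"
      using i(1) by simp
    then have "x = last (track G h)"
      using i by (simp add: last_conv_nth track_not_Nil)
    then show False
      using assms(2) upper_nbrs_last_trk by (simp add: track_def)
  qed
  then show ?thesis using i that by blast
qed

lemma promperm_track:
  assumes "x \<in> set (track G h)" "upper_nbrs G h x \<noteq> {}"
  shows "promperm G h x = Min (upper_nbrs G h x) - 1"
    and "Min (upper_nbrs G h x) \<in> set (track G h)"
proof -
  obtain i where i: "Suc i < length (track G h)" "track G h ! i = x"
    using track_succ_index[OF assms] .
  then have "track G h ! Suc i = Min (upper_nbrs G h x)"
    using trk_nth_Suc[of i G h 1] by (simp add: track_def)
  then show "promperm G h x = Min (upper_nbrs G h x) - 1"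
    and "Min (upper_nbrs G h x) \<in> set (track G h)"
    using i promperm_track_nth[OF i(1)] nth_mem[OF i(1)] by simp_all
qed

lemma promperm_track_no_upper_nbrs:
  assumes "x \<in> set (track G h)" "upper_nbrs G h x = {}"
  shows "promperm G h x = h"
proof -
  obtain i where i: "i < length (track G h)" "track G h ! i = x"
    using assms(1) by (auto simp: in_set_conv_nth)
  have "\<not> Suc i < length (track G h)"
    using trk_nth_Suc[of i G h 1] i assms(2) by (auto simp: track_def)
  then have "i = length (track G h) - 1"
    using i(1) by simp
  then have "x = last (track G h)"
    using i by (simp add: last_conv_nth track_not_Nil)
  then show ?thesis using promperm_last_track by simp
qed

lemma Min_upper_nbrs_track_le:
  assumes "x \<in> set (track G h)" "y \<in> set (track G h)" "x < y"
  shows "upper_nbrs G h x \<noteq> {} \<and> Min (upper_nbrs G h x) \<le> y"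
proof -
  let ?T = "track G h"
  have sorted: "sorted ?T"
    using sorted_trk strict_sorted_iff by (metis track_def)
  obtain i j where ij: "i < length ?T" "?T ! i = x" "j < length ?T" "?T ! j = y"
    using assms(1,2) by (auto simp: in_set_conv_nth)
  have "i < j"
    using ij assms(3) sorted_nth_mono[OF sorted, of j i] by (metis leI leD)
  then have "Suc i < length ?T" "?T ! Suc i \<le> y"
    using ij sorted_nth_mono[OF sorted, of "Suc i" j] by auto
  then show ?thesis
    using trk_nth_Suc[of i G h 1] ij by (simp add: track_def)
qed

lemma promperm_track_bounds:
  assumes "x \<in> set (track G h)" "x \<le> h"
  shows "x \<le> promperm G h x \<and> promperm G h x \<le> h"
proof (cases "upper_nbrs G h x = {}")
  case True
  then show ?thesis using assms promperm_track_no_upper_nbrs by simp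
next
  case False
  then show ?thesis
    using promperm_track(1)[OF assms(1) False] Min_upper_nbrs(1,2)[OF False] by linarith
qed

lemma promperm_ge_pred:
  assumes "x \<le> h"
  shows "x - 1 \<le> promperm G h x"
proof (cases "x \<in> set (track G h)")
  case True
  then show ?thesis using promperm_track_bounds[OF True assms] by linarith
next
  case False
  then show ?thesis using promperm_not_in_track by simp
qed

lemma promperm_in_range:
  assumes "x \<in> {1..h}"
  shows "promperm G h x \<in> {1..h}"
proof (cases "x \<in> set (track G h)")
  case True
  then show ?thesis using assms promperm_track_bounds[OF True] by auto
next
  case False
  then have "x \<noteq> 1" using one_in_track by metis
  then show ?thesis using assms promperm_not_in_track[OF False] by auto
qed

lemma promperm_less_upper_nbr:
  assumes "m < a" "a \<le> h" "G m a"
  shows "promperm G h m < a"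
proof (cases "m \<in> set (track G h)")
  case True
  have "a \<in> upper_nbrs G h m" using assms by (simp add: upper_nbrs_def)
  then have nonempty: "upper_nbrs G h m \<noteq> {}" and "Min (upper_nbrs G h m) \<le> a"
    using Min_upper_nbrs_le[of m a h G] assms by auto
  then show ?thesis
    using promperm_track(1)[OF True nonempty] Min_upper_nbrs(1)[OF nonempty] by linarith
next
  case False
  then show ?thesis using assms promperm_not_in_track by simp
qed

lemma promperm_strict_mono_on_track:
  assumes "x \<in> set (track G h)" "y \<in> set (track G h)" "x < y" "y \<le> h"
  shows "promperm G h x < promperm G h y"
proof -
  have nonempty: "upper_nbrs G h x \<noteq> {}" and "Min (upper_nbrs G h x) \<le> y"
    using Min_upper_nbrs_track_le[OF assms(1-3)] by auto
  then have "promperm G h x < y"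
    using promperm_track(1)[OF assms(1) nonempty] Min_upper_nbrs(1)[OF nonempty] by linarith
  then show ?thesis using promperm_track_bounds[OF assms(2,4)] by linarith
qed

lemma promperm_track_neq_non_track:
  assumes "x \<in> set (track G h)" "y \<notin> set (track G h)" "y \<in> {1..h}"
  shows "promperm G h x \<noteq> promperm G h y"
proof (cases "upper_nbrs G h x = {}")
  case True
  have "promperm G h y < h" using assms(2,3) promperm_not_in_track[of y G h] by auto
  then show ?thesis using assms(1) True promperm_track_no_upper_nbrs by simp
next
  case False
  have "y \<noteq> Min (upper_nbrs G h x)" using assms(2) promperm_track(2)[OF assms(1) False] by blast
  then show ?thesis
    using assms promperm_track(1)[OF assms(1) False] promperm_not_in_track[of y G h]
      Min_upper_nbrs(1)[OF False]
    by auto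
qed

lemma inj_on_promperm: "inj_on (promperm G h) {1..h}"
proof (rule inj_onI)
  fix x y assume x: "x \<in> {1..h}" and y: "y \<in> {1..h}" and eq: "promperm G h x = promperm G h y"
  consider "x \<in> set (track G h)" "y \<in> set (track G h)"
    | "x \<in> set (track G h)" "y \<notin> set (track G h)"
    | "x \<notin> set (track G h)" "y \<in> set (track G h)"
    | "x \<notin> set (track G h)" "y \<notin> set (track G h)"
    by blast
  then show "x = y"
  proof cases
    case 1
    then show ?thesis
      using x y eq promperm_strict_mono_on_track[of x G h y] promperm_strict_mono_on_track[of y G h x]
      by (cases x y rule: linorder_cases) auto
  next
    case 2
    then show ?thesis using y eq promperm_track_neq_non_track by blast
  next
    case 3
    then show ?thesis using x eq promperm_track_neq_non_track by metis
  next
    case 4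
    then show ?thesis using x y eq promperm_not_in_track by force
  qed
qed

lemma bij_betw_promperm: "bij_betw (promperm G h) {1..h} {1..h}"
proof -
  have "promperm G h ` {1..h} \<subseteq> {1..h}" using promperm_in_range by blast
  then show ?thesis by (metis bij_betw_def endo_inj_surj finite_atLeastAtMost inj_on_promperm)
qed

lemma promperm_mono_on_edge:
  assumes "1 \<le> z" "z < m" "m \<le> h" "G z m"
  shows "promperm G h z < promperm G h m"
proof -
  let ?a = "Min (upper_nbrs G h z)"
  have nonempty: "upper_nbrs G h z \<noteq> {}" using assms by (auto simp: upper_nbrs_def)
  have "?a \<le> m" using Min_upper_nbrs_le[of z m h G] assms by blast
  then consider "?a < m" | "?a = m" by linarith
  then show ?thesis
  proof cases
    case 1
    then show ?thesis
      using promperm_less_upper_nbr[of z ?a h G] Min_upper_nbrs[OF nonempty]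
        promperm_ge_pred[OF assms(3), of G] by linarith
  next
    case 2
    show ?thesis
    proof (cases "z \<in> set (track G h)")
      case True
      then have "promperm G h z = m - 1" "m \<in> set (track G h)"
        using 2 promperm_track[OF True nonempty] by auto
      then show ?thesis using promperm_track_bounds[of m G h] assms by fastforce
    next
      case False
      then show ?thesis
        using assms promperm_not_in_track[OF False] promperm_ge_pred[OF assms(3), of G] by linarith
    qed
  qed
qed

lemma promperm_inversion_no_upper_nbr:
  assumes "m < a" "a \<le> i" "i \<le> h" "promperm G h i < promperm G h m"
  shows "\<not> G m a"
  using promperm_less_upper_nbr[of m a h G] promperm_ge_pred[OF assms(3), of G] assms by linarith

section \<open>Promotion preserves shelling orders\<close>

lemma ent_append_left: "1 \<le> i \<Longrightarrow> i \<le> length P \<Longrightarrow> ent (P @ Q) i = ent P i"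
  by (simp add: ent_def nth_append less_eq_Suc_le)

lemma ent_append_right: "length P < i \<Longrightarrow> ent (P @ Q) i = ent Q (i - length P)"
  by (simp add: ent_def nth_append less_diff_conv2 diff_commute)

lemma length_permute [simp]: "length (permute \<sigma> C) = length C"
  by (simp add: permute_def del: upt_Suc)

lemma ent_permute:
  assumes "bij_betw \<sigma> {1..length C} {1..length C}" "i \<in> {1..length C}"
  shows "ent (permute \<sigma> C) (\<sigma> i) = ent C i"
proof -
  have "(THE j. 1 \<le> j \<and> j \<le> length C \<and> \<sigma> j = \<sigma> i) = i"
    by (rule the_equality) (use assms bij_betw_imp_inj_on[OF assms(1)] in \<open>auto dest: inj_onD\<close>)
  moreover have "\<sigma> i \<in> {1..length C}" using assms bij_betwE by blast
  ultimately show ?thesis by (auto simp: permute_def ent_def less_eq_Suc_le simp del: upt_Suc)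
qed

lemma shelling_prefix: "shelling k (P @ Q) \<Longrightarrow> shelling k P"
  unfolding shelling_def by (fastforce simp: ent_append_left)

lemma shellingD:
  assumes "shelling k C" "1 \<le> i" "i < j" "j \<le> length C"
  obtains z where "1 \<le> z" "z < j" "card (ent C z \<inter> ent C j) = k - 1"
    "ent C i \<inter> ent C j \<subseteq> ent C z"
  using assms unfolding shelling_def by blast

(* The shelling condition for C reordered so that entry i moves to position \<sigma> i. *)
definition shelling_along :: "nat \<Rightarrow> nat set list \<Rightarrow> (nat \<Rightarrow> nat) \<Rightarrow> bool" where
  "shelling_along k C \<sigma> \<longleftrightarrow>
     (\<forall>i\<in>{1..length C}. \<forall>m\<in>{1..length C}. \<sigma> i < \<sigma> m \<longrightarrow>
        (\<exists>z\<in>{1..length C}. \<sigma> z < \<sigma> m \<and> card (ent C z \<inter> ent C m) = k - 1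
           \<and> ent C i \<inter> ent C m \<subseteq> ent C z))"

lemma shelling_reindex:
  assumes "length L = length C" and bij: "bij_betw \<sigma> {1..length C} {1..length C}"
    and ent_L: "\<forall>i\<in>{1..length C}. ent L (\<sigma> i) = ent C i" and "shelling_along k C \<sigma>"
  shows "shelling k L"
  unfolding shelling_def
proof (intro allI impI)
  fix p q assume pq: "1 \<le> p \<and> p < q \<and> q \<le> length L"
  then have "p \<in> \<sigma> ` {1..length C}" "q \<in> \<sigma> ` {1..length C}"
    using assms(1) bij_betw_imp_surj_on[OF bij] by auto
  then obtain i m where im: "i \<in> {1..length C}" "\<sigma> i = p" "m \<in> {1..length C}" "\<sigma> m = q"
    by blast
  then obtain z where "z \<in> {1..length C}" "\<sigma> z < \<sigma> m" "card (ent C z \<inter> ent C m) = k - 1"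
      "ent C i \<inter> ent C m \<subseteq> ent C z"
    using assms(4) pq unfolding shelling_along_def by blast
  moreover from this have "1 \<le> \<sigma> z" using bij_betwE[OF bij] by fastforce
  ultimately show "\<exists>z. 1 \<le> z \<and> z < q \<and> card (ent L z \<inter> ent L q) = k - 1
      \<and> ent L p \<inter> ent L q \<subseteq> ent L z \<inter> ent L q"
    using im ent_L by (intro exI[of _ "\<sigma> z"]) auto
qed

lemma shelling_no_later_nbr:
  assumes sh: "shelling k C" and v: "1 \<le> v" "v < i" "i \<le> length C"
    and no_nbr: "\<forall>a. v < a \<and> a \<le> i \<longrightarrow> card (ent C v \<inter> ent C a) \<noteq> k - 1"
  shows "\<exists>z. 1 \<le> z \<and> z < v \<and> card (ent C z \<inter> ent C v) = k - 1 \<and> ent C i \<inter> ent C v \<subseteq> ent C z"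
proof -
  let ?F = "ent C i \<inter> ent C v"
  have "\<exists>M. 1 \<le> M \<and> M < v \<and> ?F \<subseteq> ent C M"
  proof -
    \<comment> \<open>The first entry after v that contains F is reached, by the shelling property,
      from an entry containing F; that entry is neither v (not adjacent) nor later than v.\<close>
    obtain a where a: "v < a" "a \<le> i" "?F \<subseteq> ent C a"
      and a_least: "\<And>b. b < a \<Longrightarrow> v < b \<Longrightarrow> b \<le> i \<Longrightarrow> \<not> ?F \<subseteq> ent C b"
      using exists_least_iff[of "\<lambda>a. v < a \<and> a \<le> i \<and> ?F \<subseteq> ent C a"] v by blast
    obtain z where z: "1 \<le> z" "z < a" "card (ent C z \<inter> ent C a) = k - 1"
        "ent C v \<inter> ent C a \<subseteq> ent C z"
      using shellingD[OF sh v(1) a(1)] a(2) v(3) by auto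
    have F_z: "?F \<subseteq> ent C z" using z(4) a(3) by blast
    have "z \<noteq> v" using z(3) no_nbr a(1,2) by (metis inf_commute)
    moreover have "\<not> v < z"
    proof
      assume "v < z"
      moreover have "z \<le> i" using z(2) a(2) by simp
      ultimately show False using a_least[of z] z(2) F_z by blast
    qed
    ultimately show ?thesis using z(1) F_z by (intro exI[of _ z]) simp
  qed
  then obtain M where M: "1 \<le> M" "M < v" "?F \<subseteq> ent C M" by blast
  then obtain z where "1 \<le> z" "z < v" "card (ent C z \<inter> ent C v) = k - 1"
      "ent C M \<inter> ent C v \<subseteq> ent C z"
    using shellingD[OF sh M(1,2)] v by auto
  then show ?thesis using M by blast
qed

lemma shelling_along_promperm:
  assumes sh: "shelling k C"
  shows "shelling_along k C (promperm (dual k C) (length C))"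
  unfolding shelling_along_def
proof (intro ballI impI)
  let ?\<sigma> = "promperm (dual k C) (length C)"
  fix i m assume i: "i \<in> {1..length C}" and m: "m \<in> {1..length C}" and less: "?\<sigma> i < ?\<sigma> m"
  have edge_mono: "?\<sigma> z < ?\<sigma> m" if "1 \<le> z" "z < m" "card (ent C z \<inter> ent C m) = k - 1" for z
    using that m by (intro promperm_mono_on_edge) (auto simp: dual_def)
  consider "i < m" | "m < i" using less by (cases i m rule: linorder_cases) auto
  then show "\<exists>z\<in>{1..length C}. ?\<sigma> z < ?\<sigma> m \<and> card (ent C z \<inter> ent C m) = k - 1
      \<and> ent C i \<inter> ent C m \<subseteq> ent C z"
  proof cases
    case 1
    then obtain z where z: "1 \<le> z" "z < m" "card (ent C z \<inter> ent C m) = k - 1"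
        "ent C i \<inter> ent C m \<subseteq> ent C z"
      using shellingD[OF sh] i m by auto
    then show ?thesis using edge_mono m by (intro bexI[of _ z]) auto
  next
    case 2
    have "\<forall>a. m < a \<and> a \<le> i \<longrightarrow> card (ent C m \<inter> ent C a) \<noteq> k - 1"
      using promperm_inversion_no_upper_nbr[of m _ i "length C" "dual k C"] i m less
      by (auto simp: dual_def)
    then obtain z where z: "1 \<le> z" "z < m" "card (ent C z \<inter> ent C m) = k - 1"
        "ent C i \<inter> ent C m \<subseteq> ent C z"
      using shelling_no_later_nbr[OF sh, of m i] 2 i m by auto
    then show ?thesis using edge_mono m by (intro bexI[of _ z]) auto
  qed
qed

lemma bij_betw_extend_id:
  fixes \<sigma> :: "nat \<Rightarrow> nat"
  assumes "bij_betw \<sigma> {1..h} {1..h}" "h \<le> H"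
  shows "bij_betw (\<lambda>i. if i \<le> h then \<sigma> i else i) {1..H} {1..H}"
proof -
  let ?\<tau> = "\<lambda>i. if i \<le> h then \<sigma> i else i"
  have "bij_betw ?\<tau> {1..h} {1..h}"
    using assms(1) by (subst bij_betw_cong[where g = \<sigma>]) auto
  moreover have "bij_betw ?\<tau> {h<..H} {h<..H}"
    by (subst bij_betw_cong[where g = id]) auto
  ultimately have "bij_betw ?\<tau> ({1..h} \<union> {h<..H}) ({1..h} \<union> {h<..H})"
    by (rule bij_betw_combine) auto
  moreover have "{1..h} \<union> {h<..H} = {1..H}" using assms(2) by auto
  ultimately show ?thesis by simp
qed

lemma shelling_along_extend:
  assumes sh: "shelling k (P @ Q)" and bij: "bij_betw \<sigma> {1..length P} {1..length P}"
    and along: "shelling_along k P \<sigma>"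
  shows "shelling_along k (P @ Q) (\<lambda>i. if i \<le> length P then \<sigma> i else i)"
  unfolding shelling_along_def
proof (intro ballI impI)
  let ?h = "length P" and ?\<tau> = "\<lambda>i. if i \<le> length P then \<sigma> i else i"
  have \<sigma>_range: "\<sigma> i \<in> {1..?h}" if "i \<in> {1..?h}" for i using bij_betwE[OF bij] that by blast
  fix i m assume i: "i \<in> {1..length (P @ Q)}" and m: "m \<in> {1..length (P @ Q)}"
    and less: "?\<tau> i < ?\<tau> m"
  show "\<exists>z\<in>{1..length (P @ Q)}. ?\<tau> z < ?\<tau> m \<and> card (ent (P @ Q) z \<inter> ent (P @ Q) m) = k - 1
      \<and> ent (P @ Q) i \<inter> ent (P @ Q) m \<subseteq> ent (P @ Q) z"
  proof (cases "m \<le> ?h")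
    case True
    then have "i \<le> ?h" using less i m \<sigma>_range[of m] by (auto split: if_splits)
    then have "i \<in> {1..?h}" "m \<in> {1..?h}" "\<sigma> i < \<sigma> m" using True i m less by auto
    then obtain z where "z \<in> {1..?h}" "\<sigma> z < \<sigma> m" "card (ent P z \<inter> ent P m) = k - 1"
        "ent P i \<inter> ent P m \<subseteq> ent P z"
      using along unfolding shelling_along_def by blast
    then show ?thesis using True \<open>i \<le> ?h\<close> i m by (intro bexI[of _ z]) (auto simp: ent_append_left)
  next
    case False
    then have "i < m" using less i \<sigma>_range[of i] by (auto split: if_splits)
    then obtain z where z: "1 \<le> z" "z < m" "card (ent (P @ Q) z \<inter> ent (P @ Q) m) = k - 1"
        "ent (P @ Q) i \<inter> ent (P @ Q) m \<subseteq> ent (P @ Q) z"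
      using shellingD[OF sh] i m by auto
    moreover have "?\<tau> z < ?\<tau> m" using z(1,2) False \<sigma>_range[of z] by auto
    ultimately show ?thesis using m by (intro bexI[of _ z]) auto
  qed
qed

lemma shelling_promD_append:
  assumes sh: "shelling k (P @ Q)"
  shows "shelling k (promD k P @ Q)"
proof -
  let ?h = "length P" and ?\<sigma> = "promperm (dual k P) (length P)"
  let ?\<tau> = "\<lambda>i. if i \<le> ?h then ?\<sigma> i else i"
  have bij: "bij_betw ?\<sigma> {1..?h} {1..?h}" by (rule bij_betw_promperm)
  have "ent (promD k P @ Q) (?\<tau> i) = ent (P @ Q) i" if "i \<in> {1..length (P @ Q)}" for i
  proof (cases "i \<le> ?h")
    case True
    then have "?\<sigma> i \<in> {1..?h}" using that bij_betwE[OF bij] by auto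
    then show ?thesis using True that ent_permute[OF bij, of i]
      by (simp add: promD_def ent_append_left)
  next
    case False
    then show ?thesis by (simp add: promD_def ent_append_right)
  qed
  moreover have "shelling_along k (P @ Q) ?\<tau>"
    using shelling_along_extend[OF sh bij shelling_along_promperm[OF shelling_prefix[OF sh]]] .
  ultimately show ?thesis
    using bij_betw_extend_id[OF bij] by (intro shelling_reindex[of _ "P @ Q" ?\<tau>]) (auto simp: promD_def)
qed

lemma shelling_rpromD: "shelling k C \<Longrightarrow> shelling k (rpromD k r C)"
  unfolding rpromD_def using shelling_promD_append[of k "take r C" "drop r C"] by simp

lemma shelling_foldl_rpromD:
  "shelling k C \<Longrightarrow> shelling k (foldl (\<lambda>D r. rpromD k r D) C rs)"
  by (induction rs arbitrary: C) (auto simp: shelling_rpromD)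

lemma shelling_evacD: "shelling k C \<Longrightarrow> shelling k (evacD k C)"
  by (simp add: evacD_def shelling_foldl_rpromD)

theorem theorem5p11:
  fixes k n :: nat and C :: "nat set list"
  assumes "1 \<le> k" and "k \<le> n"
    and "C \<in> Conf n k"
    and "shelling k C"
  shows "shelling k (evacD k C)"
  using assms(4) by (rule shelling_evacD)

end
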